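(* Let $k\ge 2$ and $1\le r\le k-1$. For all sufficiently large $n$ (as a function of $k$), for $T\sim\mathcal{R}(n,k)$ the probability that there exist a permutation $\pi$ of $V(T)$ and subsets $S_i\subseteq A_i$ with $|S_i|\ge n/18$ for $i=1,\ldots,r$ such that the event $Y(T,\pi,S_1,\ldots,S_r)$ occurs, is at most $\frac{1}{kn}$.
   Context: $\mathcal{R}(n,k)$ is the probability space of $k$-partite tournaments with vertex classes $A_1,\ldots,A_k$ of size $n$ each, every edge between distinct classes oriented independently and uniformly at random. For a permutation (bijection) $\pi:V(T)\to\{1,\ldots,kn\}$, $L_\pi(T)$ is the spanning subgraph of $T$ consisting of all edges $(u,v)\in E(T)$ with $\pi(u)<\pi(v)$, viewed as undirected. For $1\le r<k$, an $r$-clique $\{v_1,\ldots,v_r\}$ of $L_\pi(T)$ with $v_i\in A_i$ is friendly if for every $r<t\le k$ and every $1\le r'\le r$, the number of vertices of $A_t$ that are common neighbors of $v_1,\ldots,v_{r'}$ in $L_\pi(T)$ is at least $n/2^{r'+1}$. For $S_i\subseteq A_i$ ($i=1,\ldots,r$), $Y(T,\pi,S_1,\ldots,S_r)$ is the event that there are fewer than $0.5(1/18)^r n^r 2^{-\binom{r}{2}}$ friendly $r$-cliques $\{v_1,\ldots,v_r\}$ in $L_\pi(T)$ with $v_i\in S_i$ for all $i$. *)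

theory Defs
  imports "HOL-Probability.Probability"
begin

text \<open>Vertices of a k-partite tournament with classes A_1..A_k of size n:
  vertex (i,j) with 1 <= i <= k, j < n lies in class A_i.\<close>

definition vclass :: "nat \<Rightarrow> nat \<Rightarrow> (nat \<times> nat) set" where
  "vclass n i = {(i, j) | j. j < n}"

definition verts :: "nat \<Rightarrow> nat \<Rightarrow> (nat \<times> nat) set" where
  "verts k n = (\<Union>i\<in>{1..k}. vclass n i)"

text \<open>The uniform distribution on this finite set is exactly R(n,k).\<close>

definition tournaments :: "nat \<Rightarrow> nat \<Rightarrow> (nat \<times> nat) rel set" where
  "tournaments k n = {E. E \<subseteq> {(u, v). u \<in> verts k n \<and> v \<in> verts k n \<and> fst u \<noteq> fst v} \<and>
      (\<forall>u\<in>verts k n. \<forall>v\<in>verts k n. fst u \<noteq> fst v \<longrightarrow> ((u, v) \<in> E \<longleftrightarrow> (v, u) \<notin> E))}"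

definition Ladj :: "(nat \<times> nat) rel \<Rightarrow> (nat \<times> nat \<Rightarrow> nat) \<Rightarrow> nat \<times> nat \<Rightarrow> nat \<times> nat \<Rightarrow> bool" where
  "Ladj T \<pi> u v \<longleftrightarrow> ((u, v) \<in> T \<and> \<pi> u < \<pi> v) \<or> ((v, u) \<in> T \<and> \<pi> v < \<pi> u)"

text \<open>An r-clique {v_1,..,v_r} with v_i in A_i is represented by the function i |-> v_i
  on {1..r} (this is a bijective correspondence since the classes are disjoint).\<close>

definition is_clique :: "(nat \<times> nat) rel \<Rightarrow> (nat \<times> nat \<Rightarrow> nat) \<Rightarrow> nat \<Rightarrow> (nat \<Rightarrow> nat \<times> nat) \<Rightarrow> bool" where
  "is_clique T \<pi> r v \<longleftrightarrow> (\<forall>i\<in>{1..r}. \<forall>j\<in>{1..r}. i \<noteq> j \<longrightarrow> Ladj T \<pi> (v i) (v j))"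

definition friendly :: "nat \<Rightarrow> nat \<Rightarrow> (nat \<times> nat) rel \<Rightarrow> (nat \<times> nat \<Rightarrow> nat) \<Rightarrow> nat \<Rightarrow> (nat \<Rightarrow> nat \<times> nat) \<Rightarrow> bool" where
  "friendly k n T \<pi> r v \<longleftrightarrow> is_clique T \<pi> r v \<and>
     (\<forall>i\<in>{1..r}. v i \<in> vclass n i) \<and>
     (\<forall>t\<in>{r<..k}. \<forall>r'\<in>{1..r}.
        real (card {w \<in> vclass n t. \<forall>i\<in>{1..r'}. Ladj T \<pi> (v i) w}) \<ge> real n / 2 ^ (r' + 1))"

definition Y_event :: "nat \<Rightarrow> nat \<Rightarrow> (nat \<times> nat) rel \<Rightarrow> (nat \<times> nat \<Rightarrow> nat) \<Rightarrow> nat \<Rightarrow> (nat \<Rightarrow> (nat \<times> nat) set) \<Rightarrow> bool" where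
  "Y_event k n T \<pi> r S \<longleftrightarrow>
     real (card {v \<in> Pi\<^sub>E {1..r} S. friendly k n T \<pi> r v})
       < 0.5 * (1 / 18) ^ r * real n ^ r / 2 ^ (r choose 2)"

definition bad_event :: "nat \<Rightarrow> nat \<Rightarrow> nat \<Rightarrow> (nat \<times> nat) rel set" where
  "bad_event k n r = {T. \<exists>\<pi>. bij_betw \<pi> (verts k n) {1..k * n} \<and>
      (\<exists>S. (\<forall>i\<in>{1..r}. S i \<subseteq> vclass n i \<and> real (card (S i)) \<ge> real n / 18) \<and>
           Y_event k n T \<pi> r S)}"

end

(*
  Call an order \<pi> lower uniform for T if for all classes i < j and all X \<subseteq> A_i, Y \<subseteq> A_j the
  graph L_\<pi>(T) has more than |X||Y|/2 - \<epsilon>n\<^sup>2 edges between X and Y.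

  Lower uniformity with \<epsilon> small in terms of k and r rules out Y(T, \<pi>, S_1, ..., S_r): friendly
  cliques are built greedily, choosing v_{j+1} \<in> S_{j+1} in the common neighbourhood of v_1..v_j
  so that every later common neighbourhood keeps an \<alpha> = 1/2 - 1/(8r\<^sup>2) fraction of its pool.
  Lower uniformity shows that all but few candidates qualify, so there are at least
  \<Prod>_{j<r} (1 - 1/(2r)) n/(18 2^j) \<ge> (1/2) (n/18)^r / 2^(r choose 2) such cliques.

  For fixed \<pi>, X and Y the L_\<pi>-edges between X and Y are independent fair coins, so Hoeffding's
  inequality bounds the probability that uniformity fails there by exp(-2\<epsilon>\<^sup>2n\<^sup>2). A union bound over
  at most (kn)^(kn) orders and 4^(kn) pairs (X, Y) leaves a probability below 1/(kn) for large n.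
*)
theory Submission
  imports Defs "HOL-Real_Asymp.Real_Asymp"
begin

lemma vclass_eq: "vclass n i = {i} \<times> {..<n}"
  unfolding vclass_def by auto

lemma finite_vclass [simp]: "finite (vclass n i)"
  by (simp add: vclass_eq)

lemma card_vclass [simp]: "card (vclass n i) = n"
  by (simp add: vclass_eq card_cartesian_product)

lemma verts_eq: "verts k n = {1..k} \<times> {..<n}"
  unfolding verts_def vclass_def by auto

lemma Ladj_commute: "Ladj T \<pi> u v = Ladj T \<pi> v u"
  unfolding Ladj_def by auto

section \<open>Lower uniformity\<close>

definition cross_edges :: "(nat \<times> nat) rel \<Rightarrow> (nat \<times> nat \<Rightarrow> nat) \<Rightarrow> (nat \<times> nat) set \<Rightarrow> (nat \<times> nat) set \<Rightarrow> nat" where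
  "cross_edges T \<pi> X Y = card {p \<in> X \<times> Y. Ladj T \<pi> (fst p) (snd p)}"

definition cross_class_pairs :: "nat \<Rightarrow> nat \<Rightarrow> ((nat \<times> nat) set \<times> (nat \<times> nat) set) set" where
  "cross_class_pairs k n =
     {(X, Y). \<exists>i j. 1 \<le> i \<and> i < j \<and> j \<le> k \<and> X \<subseteq> vclass n i \<and> Y \<subseteq> vclass n j}"

definition lower_uniform :: "nat \<Rightarrow> nat \<Rightarrow> (nat \<times> nat) rel \<Rightarrow> (nat \<times> nat \<Rightarrow> nat) \<Rightarrow> real \<Rightarrow> bool" where
  "lower_uniform k n T \<pi> \<epsilon> \<longleftrightarrow> (\<forall>X Y. (X, Y) \<in> cross_class_pairs k n \<longrightarrow>
     real (cross_edges T \<pi> X Y) > real (card X * card Y) / 2 - \<epsilon> * real n ^ 2)"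

lemma cross_edges_eq_sum:
  assumes "finite X" and "finite Y"
  shows "cross_edges T \<pi> X Y = (\<Sum>w\<in>X. card (Y \<inter> {y. Ladj T \<pi> w y}))"
proof -
  have "{p \<in> X \<times> Y. Ladj T \<pi> (fst p) (snd p)} = (SIGMA w:X. Y \<inter> {y. Ladj T \<pi> w y})"
    by auto
  then show ?thesis
    using assms by (simp add: cross_edges_def)
qed

lemma low_degree_vertices_few:
  assumes "lower_uniform k n T \<pi> \<epsilon>" and "1 \<le> i" "i < t" "t \<le> k"
    and "X \<subseteq> vclass n i" "M \<subseteq> vclass n t"
  shows "real (card {w \<in> X. real (card (M \<inter> {y. Ladj T \<pi> w y})) < \<alpha> * real (card M)})
           * ((1/2 - \<alpha>) * real (card M)) < \<epsilon> * real n ^ 2"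
proof -
  define B where "B = {w \<in> X. real (card (M \<inter> {y. Ladj T \<pi> w y})) < \<alpha> * real (card M)}"
  have "finite X" and "finite M"
    using assms(5,6) finite_subset finite_vclass by blast+
  then have fin: "finite B" "finite M"
    by (simp_all add: B_def)
  have "(B, M) \<in> cross_class_pairs k n"
    using assms(2-6) unfolding cross_class_pairs_def B_def
    by (intro CollectI case_prodI exI[of _ i] exI[of _ t]) auto
  then have "real (card B * card M) / 2 - \<epsilon> * real n ^ 2 < real (cross_edges T \<pi> B M)"
    using assms(1) unfolding lower_uniform_def by blast
  also have "\<dots> = (\<Sum>w\<in>B. real (card (M \<inter> {y. Ladj T \<pi> w y})))"
    using fin by (simp add: cross_edges_eq_sum)
  also have "\<dots> \<le> (\<Sum>w\<in>B. \<alpha> * real (card M))"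
    by (rule sum_mono) (simp add: B_def)
  finally show ?thesis
    by (simp add: B_def algebra_simps)
qed

section \<open>Counting friendly cliques in a lower-uniform order\<close>

definition common_nbhd :: "(nat \<times> nat) rel \<Rightarrow> (nat \<times> nat \<Rightarrow> nat) \<Rightarrow> (nat \<Rightarrow> nat \<times> nat) \<Rightarrow> nat \<Rightarrow> (nat \<times> nat) set" where
  "common_nbhd T \<pi> v j = {w. \<forall>i\<in>{1..j}. Ladj T \<pi> (v i) w}"

lemma common_nbhd_0 [simp]: "common_nbhd T \<pi> v 0 = UNIV"
  by (simp add: common_nbhd_def)

lemma common_nbhd_fun_upd_le: "i \<le> j \<Longrightarrow> common_nbhd T \<pi> (v(Suc j := w)) i = common_nbhd T \<pi> v i"
  unfolding common_nbhd_def by auto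

lemma common_nbhd_fun_upd_Suc:
  "common_nbhd T \<pi> (v(Suc j := w)) (Suc j) = common_nbhd T \<pi> v j \<inter> {y. Ladj T \<pi> w y}"
proof -
  have "{1..Suc j} = insert (Suc j) {1..j}"
    by auto
  then show ?thesis
    unfolding common_nbhd_def by auto
qed

definition pool :: "nat \<Rightarrow> nat \<Rightarrow> (nat \<Rightarrow> (nat \<times> nat) set) \<Rightarrow> nat \<Rightarrow> (nat \<times> nat) set" where
  "pool n r S t = (if t \<le> r then S t else vclass n t)"

definition clique_delta :: "nat \<Rightarrow> real" where
  "clique_delta r = 1 / (8 * real r ^ 2)"

text \<open>Chosen so that in the greedy step at most \<open>n / (72 k r 2\<^sup>j)\<close> candidates are deficient
  towards any one later class (\<open>card_deficient_le\<close>).\<close>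

definition clique_eps :: "nat \<Rightarrow> nat \<Rightarrow> real" where
  "clique_eps k r = clique_delta r * (1/2 - clique_delta r) ^ r / (1296 * real k * real r * 2 ^ r)"

lemma clique_delta_pos: "1 \<le> r \<Longrightarrow> 0 < clique_delta r"
  by (simp add: clique_delta_def)

lemma clique_delta_le: "1 \<le> r \<Longrightarrow> clique_delta r \<le> 1/8"
  by (simp add: clique_delta_def field_simps)

lemma clique_eps_pos:
  assumes "1 \<le> r" and "0 < k"
  shows "0 < clique_eps k r"
proof -
  have "0 < 1/2 - clique_delta r"
    using clique_delta_le[OF assms(1)] by simp
  then show ?thesis
    using assms clique_delta_pos[OF assms(1)] by (simp add: clique_eps_def)
qed

lemma prod_power_lessThan: "(\<Prod>i<m. (2::real) ^ i) = 2 ^ (m choose 2)"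
  by (induction m) (simp_all add: numeral_2_eq_2 power_add)

lemma prod_growth_ge:
  assumes "1 \<le> r" and "0 \<le> x"
  shows "0.5 * (1 / 18) ^ r * x ^ r / 2 ^ (r choose 2)
           \<le> (\<Prod>i<r. (1 - 1 / (2 * real r)) * (x / (18 * 2 ^ i)))"
proof -
  have "1 / 2 \<le> 1 + real r * (- 1 / (2 * real r))"
    using assms by simp
  also have "\<dots> \<le> (1 - 1 / (2 * real r)) ^ r"
    using Bernoulli_inequality[of "- 1 / (2 * real r)" r] assms by (simp add: field_simps)
  finally have "0.5 * ((x / 18) ^ r / 2 ^ (r choose 2))
      \<le> (1 - 1 / (2 * real r)) ^ r * ((x / 18) ^ r / 2 ^ (r choose 2))"
    using assms by (intro mult_right_mono) auto
  also have "\<dots> = (\<Prod>i<r. (1 - 1 / (2 * real r)) * (x / (18 * 2 ^ i)))"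
    by (simp add: prod.distrib prod_dividef power_divide power_mult_distrib prod_power_lessThan)
  finally show ?thesis
    by (simp add: power_divide)
qed

locale greedy_clique_setting =
  fixes k n r :: nat and T :: "(nat \<times> nat) rel" and \<pi> :: "nat \<times> nat \<Rightarrow> nat"
    and S :: "nat \<Rightarrow> (nat \<times> nat) set"
  assumes r_pos: "1 \<le> r" and r_less_k: "r < k" and n_pos: "0 < n"
    and S_sub: "\<And>i. i \<in> {1..r} \<Longrightarrow> S i \<subseteq> vclass n i"
    and S_large: "\<And>i. i \<in> {1..r} \<Longrightarrow> real n / 18 \<le> real (card (S i))"
    and uniform: "lower_uniform k n T \<pi> (clique_eps k r)"
begin

abbreviation \<delta> :: real where "\<delta> \<equiv> clique_delta r"
abbreviation \<alpha> :: real where "\<alpha> \<equiv> 1/2 - \<delta>"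
abbreviation N :: "(nat \<Rightarrow> nat \<times> nat) \<Rightarrow> nat \<Rightarrow> (nat \<times> nat) set" where "N \<equiv> common_nbhd T \<pi>"
abbreviation U :: "nat \<Rightarrow> (nat \<times> nat) set" where "U \<equiv> pool n r S"

lemma delta_pos: "0 < \<delta>"
  using r_pos by (rule clique_delta_pos)

lemma delta_le: "\<delta> \<le> 1/8"
  using r_pos by (rule clique_delta_le)

lemma alpha_pos: "0 < \<alpha>"
  using delta_le by simp

lemma alpha_pow_ge:
  assumes "i \<le> r"
  shows "(1 - 1 / (4 * real r)) / 2 ^ i \<le> \<alpha> ^ i"
proof -
  have "1 - 1 / (4 * real r) = 1 + real r * (- 2 * \<delta>)"
    using r_pos by (simp add: clique_delta_def field_simps power2_eq_square)
  also have "\<dots> \<le> 1 + real i * (- 2 * \<delta>)"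
    using assms delta_pos by (simp add: mult_left_mono)
  also have "\<dots> \<le> (1 + (- 2 * \<delta>)) ^ i"
    using delta_le by (intro Bernoulli_inequality) simp
  also have "\<dots> = 2 ^ i * \<alpha> ^ i"
    by (simp flip: power_mult_distrib)
  finally show ?thesis
    by (simp add: divide_le_eq mult.commute)
qed

lemma pool_subset: "t \<in> {1..k} \<Longrightarrow> U t \<subseteq> vclass n t"
  using S_sub by (simp add: pool_def)

lemma pool_large: "t \<in> {1..k} \<Longrightarrow> real n / 18 \<le> real (card (U t))"
  using S_large by (simp add: pool_def)

definition good_cliques :: "nat \<Rightarrow> (nat \<Rightarrow> nat \<times> nat) set" where
  "good_cliques j = {v \<in> Pi\<^sub>E {1..j} S. is_clique T \<pi> j v \<and>
     (\<forall>i\<le>j. \<forall>t\<in>{i<..k}. \<alpha> ^ i * real (card (U t)) \<le> real (card (N v i \<inter> U t)))}"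

definition deficient :: "(nat \<Rightarrow> nat \<times> nat) \<Rightarrow> nat \<Rightarrow> nat \<Rightarrow> (nat \<times> nat) set" where
  "deficient v j t = {w \<in> N v j \<inter> U (Suc j).
     real (card (N v j \<inter> U t \<inter> {y. Ladj T \<pi> w y})) < \<alpha> * real (card (N v j \<inter> U t))}"

definition extensions :: "(nat \<Rightarrow> nat \<times> nat) \<Rightarrow> nat \<Rightarrow> (nat \<times> nat) set" where
  "extensions v j = N v j \<inter> U (Suc j) - (\<Union>t\<in>{Suc j<..k}. deficient v j t)"

lemma finite_good_cliques:
  assumes "j \<le> r"
  shows "finite (good_cliques j)"
proof -
  have "finite (Pi\<^sub>E {1..j} S)"
    using assms by (intro finite_PiE) (auto intro: finite_subset[OF S_sub])
  then show ?thesis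
    unfolding good_cliques_def by (rule finite_subset[rotated]) auto
qed

lemma good_cliques_0: "good_cliques 0 = {\<lambda>_. undefined}"
  by (auto simp: good_cliques_def is_clique_def)

lemma good_clique_nbhd:
  "v \<in> good_cliques j \<Longrightarrow> i \<le> j \<Longrightarrow> t \<in> {i<..k} \<Longrightarrow>
     \<alpha> ^ i * real (card (U t)) \<le> real (card (N v i \<inter> U t))"
  unfolding good_cliques_def by blast

lemma good_clique_nbhd_large:
  assumes "v \<in> good_cliques j" and "t \<in> {j<..k}"
  shows "\<alpha> ^ j * (real n / 18) \<le> real (card (N v j \<inter> U t))"
proof -
  have "\<alpha> ^ j * (real n / 18) \<le> \<alpha> ^ j * real (card (U t))"
    using pool_large[of t] assms(2) alpha_pos by (intro mult_left_mono) auto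
  also have "\<dots> \<le> real (card (N v j \<inter> U t))"
    using assms by (simp add: good_clique_nbhd)
  finally show ?thesis .
qed

lemma card_deficient_le:
  assumes v: "v \<in> good_cliques j" and "j < r" and t: "t \<in> {Suc j<..k}"
  shows "real (card (deficient v j t)) \<le> real n / (72 * real k * real r * 2 ^ j)"
proof -
  define M where "M = N v j \<inter> U t"
  define c where "c = \<delta> * \<alpha> ^ r * (real n / 18)"
  have c_pos: "0 < c"
    using delta_pos alpha_pos n_pos by (simp add: c_def)
  have "\<alpha> ^ r * (real n / 18) \<le> \<alpha> ^ j * (real n / 18)"
    using \<open>j < r\<close> alpha_pos delta_pos by (intro mult_right_mono power_decreasing) auto
  also have "\<dots> \<le> real (card M)"
    unfolding M_def using good_clique_nbhd_large[OF v] t by simp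
  finally have "c \<le> \<delta> * real (card M)"
    using delta_pos by (simp add: c_def)
  then have "real (card (deficient v j t)) * c \<le> real (card (deficient v j t)) * (\<delta> * real (card M))"
    by (simp add: mult_left_mono)
  also have "\<dots> < clique_eps k r * real n ^ 2"
    using low_degree_vertices_few[OF uniform, of "Suc j" t "N v j \<inter> U (Suc j)" M \<alpha>]
      pool_subset[of "Suc j"] pool_subset[of t] \<open>j < r\<close> r_less_k t
    by (fastforce simp: deficient_def M_def)
  also have "\<dots> = c * (real n / (72 * real k * real r * 2 ^ r))"
    using r_pos r_less_k by (simp add: c_def clique_eps_def field_simps power2_eq_square)
  also have "\<dots> \<le> c * (real n / (72 * real k * real r * 2 ^ j))"
    using c_pos \<open>j < r\<close> r_pos r_less_k
    by (intro mult_left_mono divide_left_mono mult_left_mono power_increasing) auto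
  finally have "real (card (deficient v j t)) * c < real n / (72 * real k * real r * 2 ^ j) * c"
    by (simp only: mult.commute[of c])
  then show ?thesis
    unfolding mult_less_cancel_right_pos[OF c_pos] by (rule less_imp_le)
qed

lemma card_extensions_ge:
  assumes v: "v \<in> good_cliques j" and "j < r"
  shows "(1 - 1 / (2 * real r)) * (real n / (18 * 2 ^ j)) \<le> real (card (extensions v j))"
proof -
  define A where "A = N v j \<inter> U (Suc j)"
  define C where "C = (\<Union>t\<in>{Suc j<..k}. deficient v j t)"
  define X where "X = real n / (18 * 2 ^ j)"
  define e where "e = X / (4 * real r)"
  have "A \<subseteq> vclass n (Suc j)"
    unfolding A_def using pool_subset[of "Suc j"] \<open>j < r\<close> r_less_k by auto
  then have "finite A"
    by (rule finite_subset) simp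
  have "C \<subseteq> A"
    unfolding C_def A_def deficient_def by auto
  have "X - e = (1 - 1 / (4 * real r)) / 2 ^ j * (real n / 18)"
    using r_pos by (simp add: X_def e_def field_simps)
  also have "\<dots> \<le> \<alpha> ^ j * (real n / 18)"
    using alpha_pow_ge[of j] \<open>j < r\<close> by (intro mult_right_mono) auto
  also have "\<dots> \<le> real (card A)"
    unfolding A_def using good_clique_nbhd_large[OF v] \<open>j < r\<close> r_less_k by simp
  also have "\<dots> = real (card (A - C)) + real (card C)"
    using card_Int_Diff[OF \<open>finite A\<close>, of C] \<open>C \<subseteq> A\<close> by (simp add: Int_absorb1)
  finally have A_minus_C: "X - e \<le> real (card (A - C)) + real (card C)" .
  have "real (card C) \<le> (\<Sum>t\<in>{Suc j<..k}. real (card (deficient v j t)))"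
    unfolding C_def by (metis card_UN_le finite_greaterThanAtMost of_nat_le_iff of_nat_sum)
  also have "\<dots> \<le> (\<Sum>t\<in>{Suc j<..k}. real n / (72 * real k * real r * 2 ^ j))"
    using card_deficient_le[OF v \<open>j < r\<close>] by (intro sum_mono) auto
  also have "\<dots> \<le> real k * (real n / (72 * real k * real r * 2 ^ j))"
    unfolding sum_constant by (intro mult_right_mono) auto
  also have "\<dots> = e"
    using r_less_k by (simp add: X_def e_def field_simps)
  finally have "real (card C) \<le> e" .
  moreover have "(1 - 1 / (2 * real r)) * (real n / (18 * 2 ^ j)) = X - 2 * e"
    using r_pos by (simp add: X_def e_def field_simps)
  ultimately show ?thesis
    unfolding extensions_def A_def[symmetric] C_def[symmetric] using A_minus_C by linarith
qed

lemma extend_good_clique: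
  assumes v: "v \<in> good_cliques j" and "j < r" and w: "w \<in> extensions v j"
  shows "v(Suc j := w) \<in> good_cliques (Suc j)"
proof -
  let ?v = "v(Suc j := w)"
  have w_nbhd: "w \<in> N v j" and "w \<in> S (Suc j)"
    using w \<open>j < r\<close> by (auto simp: extensions_def pool_def)
  have "v \<in> Pi\<^sub>E {1..j} S"
    using v by (simp add: good_cliques_def)
  then have "?v \<in> Pi\<^sub>E (insert (Suc j) {1..j}) S"
    using \<open>w \<in> S (Suc j)\<close> by (intro PiE_fun_upd)
  then have "?v \<in> Pi\<^sub>E {1..Suc j} S"
    by (simp add: atLeastAtMostSuc_conv)
  moreover have "is_clique T \<pi> (Suc j) ?v"
    unfolding is_clique_def
  proof (intro ballI impI)
    fix a b assume "a \<in> {1..Suc j}" "b \<in> {1..Suc j}" "a \<noteq> b"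
    moreover have "Ladj T \<pi> (v i) w" if "i \<in> {1..j}" for i
      using w_nbhd that unfolding common_nbhd_def by blast
    moreover have "is_clique T \<pi> j v"
      using v by (simp add: good_cliques_def)
    ultimately show "Ladj T \<pi> (?v a) (?v b)"
      unfolding is_clique_def
      by (cases "a = Suc j"; cases "b = Suc j") (auto simp: Ladj_commute[of T \<pi> w])
  qed
  moreover have "\<alpha> ^ i * real (card (U t)) \<le> real (card (N ?v i \<inter> U t))"
    if "i \<le> Suc j" and "t \<in> {i<..k}" for i t
  proof (cases "i \<le> j")
    case True
    then show ?thesis
      using good_clique_nbhd[OF v True] that by (simp add: common_nbhd_fun_upd_le)
  next
    case False
    then have i: "i = Suc j" and t: "t \<in> {Suc j<..k}"
      using that by auto
    have "\<alpha> ^ i * real (card (U t)) = \<alpha> * (\<alpha> ^ j * real (card (U t)))"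
      by (simp add: i)
    also have "\<dots> \<le> \<alpha> * real (card (N v j \<inter> U t))"
      using good_clique_nbhd[OF v order_refl, of t] t alpha_pos by (intro mult_left_mono) auto
    also have "\<dots> \<le> real (card (N v j \<inter> U t \<inter> {y. Ladj T \<pi> w y}))"
    proof -
      have "w \<notin> deficient v j t" and "w \<in> N v j \<inter> U (Suc j)"
        using w t unfolding extensions_def by auto
      then show ?thesis
        unfolding deficient_def by (simp add: not_less)
    qed
    also have "N v j \<inter> U t \<inter> {y. Ladj T \<pi> w y} = N ?v i \<inter> U t"
      by (auto simp: i common_nbhd_fun_upd_Suc)
    finally show ?thesis .
  qed
  ultimately show ?thesis
    unfolding good_cliques_def by blast
qed

lemma card_good_cliques_Suc_ge:
  assumes "j < r"
  shows "real (card (good_cliques j)) * ((1 - 1 / (2 * real r)) * (real n / (18 * 2 ^ j)))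
           \<le> real (card (good_cliques (Suc j)))"
proof -
  let ?E = "SIGMA v:good_cliques j. extensions v j"
  let ?extend = "\<lambda>(v, w). v(Suc j := w)"
  have "finite (extensions v j)" for v
  proof -
    have "extensions v j \<subseteq> vclass n (Suc j)"
      using pool_subset[of "Suc j"] \<open>j < r\<close> r_less_k unfolding extensions_def by auto
    then show ?thesis
      by (rule finite_subset) simp
  qed
  moreover have "finite (good_cliques j)"
    using \<open>j < r\<close> by (simp add: finite_good_cliques)
  ultimately have card_E: "(\<Sum>v\<in>good_cliques j. real (card (extensions v j))) = real (card ?E)"
    by simp
  have undefined_Suc: "v (Suc j) = undefined" if "v \<in> good_cliques j" for v
  proof -
    have "v \<in> Pi\<^sub>E {1..j} S"
      using that by (simp add: good_cliques_def)
    then show ?thesis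
      by (rule PiE_arb) simp
  qed
  have "inj_on ?extend ?E"
    by (rule inj_on_inverseI[where g = "\<lambda>u. (u(Suc j := undefined), u (Suc j))"])
       (auto simp: undefined_Suc)
  moreover have "?extend ` ?E \<subseteq> good_cliques (Suc j)"
    using extend_good_clique \<open>j < r\<close> by auto
  ultimately have "card ?E \<le> card (good_cliques (Suc j))"
    using \<open>j < r\<close> by (intro card_inj_on_le finite_good_cliques) auto
  have "real (card (good_cliques j)) * ((1 - 1 / (2 * real r)) * (real n / (18 * 2 ^ j)))
      = (\<Sum>v\<in>good_cliques j. (1 - 1 / (2 * real r)) * (real n / (18 * 2 ^ j)))"
    by simp
  also have "\<dots> \<le> (\<Sum>v\<in>good_cliques j. real (card (extensions v j)))"
    using card_extensions_ge \<open>j < r\<close> by (intro sum_mono)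
  also have "\<dots> \<le> real (card (good_cliques (Suc j)))"
    using card_E \<open>card ?E \<le> card (good_cliques (Suc j))\<close> by simp
  finally show ?thesis .
qed

lemma card_good_cliques_ge:
  "j \<le> r \<Longrightarrow> (\<Prod>i<j. (1 - 1 / (2 * real r)) * (real n / (18 * 2 ^ i))) \<le> real (card (good_cliques j))"
proof (induction j)
  case 0
  then show ?case
    by (simp add: good_cliques_0)
next
  case (Suc j)
  have "1 / (2 * real r) \<le> 1"
    using r_pos by simp
  then have "0 \<le> (1 - 1 / (2 * real r)) * (real n / (18 * 2 ^ j))"
    by simp
  have "(\<Prod>i<Suc j. (1 - 1 / (2 * real r)) * (real n / (18 * 2 ^ i)))
      = (\<Prod>i<j. (1 - 1 / (2 * real r)) * (real n / (18 * 2 ^ i)))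
        * ((1 - 1 / (2 * real r)) * (real n / (18 * 2 ^ j)))"
    by simp
  also have "\<dots> \<le> real (card (good_cliques j)) * ((1 - 1 / (2 * real r)) * (real n / (18 * 2 ^ j)))"
    using Suc \<open>0 \<le> (1 - 1 / (2 * real r)) * (real n / (18 * 2 ^ j))\<close>
    by (intro mult_right_mono) auto
  also have "\<dots> \<le> real (card (good_cliques (Suc j)))"
    using Suc.prems by (intro card_good_cliques_Suc_ge) simp
  finally show ?case .
qed

lemma good_clique_friendly:
  assumes v: "v \<in> good_cliques r"
  shows "friendly k n T \<pi> r v"
  unfolding friendly_def
proof (intro conjI ballI)
  show "is_clique T \<pi> r v"
    using v by (simp add: good_cliques_def)
  show "v i \<in> vclass n i" if "i \<in> {1..r}" for i
    using v S_sub[OF that] that by (auto simp: good_cliques_def)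
  fix t i assume t: "t \<in> {r<..k}" and i: "i \<in> {1..r}"
  have "1 / (4 * real r) \<le> 1 / 2"
    using r_pos by simp
  have "real n / 2 ^ (i + 1) = 1 / 2 / 2 ^ i * real n"
    by simp
  also have "\<dots> \<le> (1 - 1 / (4 * real r)) / 2 ^ i * real n"
    using \<open>1 / (4 * real r) \<le> 1 / 2\<close> by (intro mult_right_mono divide_right_mono) auto
  also have "\<dots> \<le> \<alpha> ^ i * real n"
    using i by (intro mult_right_mono alpha_pow_ge) auto
  also have "\<dots> = \<alpha> ^ i * real (card (U t))"
    using t by (simp add: pool_def)
  also have "\<dots> \<le> real (card (N v i \<inter> U t))"
    using good_clique_nbhd[OF v, of i t] i t by simp
  also have "N v i \<inter> U t = {w \<in> vclass n t. \<forall>i'\<in>{1..i}. Ladj T \<pi> (v i') w}"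
    using t by (auto simp: pool_def common_nbhd_def)
  finally show "real n / 2 ^ (i + 1) \<le> real (card {w \<in> vclass n t. \<forall>i'\<in>{1..i}. Ladj T \<pi> (v i') w})" .
qed

lemma not_Y_event: "\<not> Y_event k n T \<pi> r S"
proof -
  have "finite (Pi\<^sub>E {1..r} S)"
    by (intro finite_PiE) (auto intro: finite_subset[OF S_sub])
  then have "card (good_cliques r) \<le> card {v \<in> Pi\<^sub>E {1..r} S. friendly k n T \<pi> r v}"
    using good_clique_friendly by (intro card_mono) (auto simp: good_cliques_def)
  then show ?thesis
    using card_good_cliques_ge[of r] prod_growth_ge[OF r_pos, of "real n"] unfolding Y_event_def by simp
qed

end

section \<open>A random tournament as independent coin flips\<close>

lemma prob_few_agreements_le:
  fixes c :: "'a \<Rightarrow> bool" and t N :: real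
  assumes "finite Q" and "I \<subseteq> Q" and "real (card I) \<le> N" and "t > 0"
  shows "measure_pmf.prob (Pi_pmf Q False (\<lambda>_. bernoulli_pmf (1/2)))
           {b. real (card {p \<in> I. b p = c p}) \<le> real (card I) / 2 - t}
         \<le> exp (- 2 * t\<^sup>2 / N)"
proof (cases "I = {}")
  case False
  define M where "M = Pi_pmf Q False (\<lambda>_. bernoulli_pmf (1/2))"
  define Z where "Z = (\<lambda>p b. if b p = c p then 1 else (0::real))"
  have fin: "finite I"
    using assms finite_subset by blast
  then have card_pos: "real (card I) > 0"
    using False by (simp add: card_gt_0_iff)
  have coin: "measure_pmf.expectation M (Z p) = 1 / 2" if "p \<in> I" for p
  proof -
    have "measure_pmf.expectation M (Z p) =
        measure_pmf.expectation (map_pmf (\<lambda>b. b p) M) (\<lambda>x. if x = c p then 1 else (0::real))"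
      unfolding Z_def by simp
    also have "map_pmf (\<lambda>b. b p) M = bernoulli_pmf (1/2)"
      using that assms(2) unfolding M_def by (subst Pi_pmf_component[OF assms(1)]) auto
    finally show ?thesis
      by simp
  qed
  interpret Hoeffding_ineq M I Z "\<lambda>_. 0" "\<lambda>_. 1" "real (card I) / 2"
  proof unfold_locales
    have "prob_space.indep_vars M (\<lambda>_. count_space UNIV) (\<lambda>p b. b p) I"
      using prob_space.indep_vars_subset[OF measure_pmf.prob_space_axioms
          indep_vars_Pi_pmf[OF assms(1)] assms(2)] unfolding M_def .
    then show "prob_space.indep_vars M (\<lambda>_. borel) Z I"
      unfolding Z_def by (rule prob_space.indep_vars_compose2[OF measure_pmf.prob_space_axioms]) simp
    show "real (card I) / 2 \<equiv> \<Sum>p\<in>I. measure_pmf.expectation M (Z p)"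
      by (simp add: coin)
  qed (auto simp: fin Z_def)
  have count: "real (card {p \<in> I. b p = c p}) = (\<Sum>p\<in>I. Z p b)" for b
    using fin by (simp add: Z_def sum.If_cases Int_def)
  have "measure_pmf.prob M {b. (\<Sum>p\<in>I. Z p b) \<le> real (card I) / 2 - t}
      \<le> exp (- 2 * t\<^sup>2 / real (card I))"
    using Hoeffding_ineq_le[of t] assms(4) fin card_pos by simp
  also have "\<dots> \<le> exp (- 2 * t\<^sup>2 / N)"
    using assms(3,4) card_pos by (simp add: frac_le)
  finally show ?thesis
    by (simp add: count M_def)
qed (use assms(4) in simp)

definition forward_pairs :: "nat \<Rightarrow> nat \<Rightarrow> ((nat \<times> nat) \<times> (nat \<times> nat)) set" where
  "forward_pairs k n = {(u, v). u \<in> verts k n \<and> v \<in> verts k n \<and> fst u < fst v}"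

text \<open>A tournament is determined by the forward pairs (from a lower to a higher class) it
  contains; the remaining forward pairs occur reversed.\<close>

definition orient :: "nat \<Rightarrow> nat \<Rightarrow> (nat \<times> nat) rel \<Rightarrow> (nat \<times> nat) rel" where
  "orient k n D = D \<union> (forward_pairs k n - D)\<inverse>"

lemma finite_forward_pairs: "finite (forward_pairs k n)"
  by (rule finite_subset[of _ "verts k n \<times> verts k n"]) (auto simp: forward_pairs_def verts_eq)

lemma orient_in_tournaments: "D \<subseteq> forward_pairs k n \<Longrightarrow> orient k n D \<in> tournaments k n"
  unfolding tournaments_def orient_def forward_pairs_def by (auto simp: linorder_neq_iff)

lemma orient_Int_forward_pairs: "D \<subseteq> forward_pairs k n \<Longrightarrow> orient k n D \<inter> forward_pairs k n = D"
  unfolding orient_def forward_pairs_def by auto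

lemma orient_tournament_Int_forward_pairs:
  "T \<in> tournaments k n \<Longrightarrow> orient k n (T \<inter> forward_pairs k n) = T"
  unfolding tournaments_def orient_def forward_pairs_def by (auto simp: linorder_neq_iff)

lemma bij_betw_orient: "bij_betw (orient k n) (Pow (forward_pairs k n)) (tournaments k n)"
  by (rule bij_betw_byWitness[where f' = "\<lambda>T. T \<inter> forward_pairs k n"])
     (auto simp: orient_Int_forward_pairs orient_tournament_Int_forward_pairs orient_in_tournaments)

lemma pmf_of_set_tournaments:
  "pmf_of_set (tournaments k n) =
     map_pmf (\<lambda>b. orient k n {p \<in> forward_pairs k n. b p})
       (Pi_pmf (forward_pairs k n) False (\<lambda>_. bernoulli_pmf (1/2)))"
proof -
  have "pmf_of_set (tournaments k n) = map_pmf (orient k n) (pmf_of_set (Pow (forward_pairs k n)))"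
    by (rule map_pmf_of_set_bij_betw[symmetric]) (use bij_betw_orient finite_forward_pairs in auto)
  also have "pmf_of_set (Pow (forward_pairs k n)) =
      map_pmf (\<lambda>b. {p \<in> forward_pairs k n. b p}) (Pi_pmf (forward_pairs k n) False (\<lambda>_. bernoulli_pmf (1/2)))"
    by (rule pmf_of_set_Pow_conv_bernoulli[symmetric]) (rule finite_forward_pairs)
  finally show ?thesis
    by (simp add: map_pmf_comp)
qed

lemma Ladj_orient:
  assumes "inj_on \<pi> (verts k n)" and "(x, y) \<in> forward_pairs k n"
  shows "Ladj (orient k n {p \<in> forward_pairs k n. b p}) \<pi> x y \<longleftrightarrow> (b (x, y) \<longleftrightarrow> \<pi> x < \<pi> y)"
proof -
  have "x \<in> verts k n" "y \<in> verts k n" "fst x < fst y"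
    using assms(2) unfolding forward_pairs_def by auto
  then have "\<pi> x \<noteq> \<pi> y" and "(y, x) \<notin> forward_pairs k n"
    using assms(1) unfolding forward_pairs_def by (auto dest: inj_onD)
  moreover have "(x, y) \<in> orient k n {p \<in> forward_pairs k n. b p} \<longleftrightarrow> b (x, y)"
    and "(y, x) \<in> orient k n {p \<in> forward_pairs k n. b p} \<longleftrightarrow> \<not> b (x, y)"
    using assms(2) \<open>(y, x) \<notin> forward_pairs k n\<close> unfolding orient_def by auto
  ultimately show ?thesis
    unfolding Ladj_def by auto
qed

lemma prob_sparse_pair_le:
  assumes "inj_on \<pi> (verts k n)" and "1 \<le> i" "i < j" "j \<le> k"
    and "X \<subseteq> vclass n i" "Y \<subseteq> vclass n j" and "\<epsilon> > 0" "n > 0"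
  shows "measure_pmf.prob (pmf_of_set (tournaments k n))
           {T. real (cross_edges T \<pi> X Y) \<le> real (card X * card Y) / 2 - \<epsilon> * real n ^ 2}
         \<le> exp (- 2 * \<epsilon>\<^sup>2 * real n ^ 2)"
proof -
  let ?c = "\<lambda>p. \<pi> (fst p) < \<pi> (snd p)"
  have XY: "X \<times> Y \<subseteq> forward_pairs k n"
    using assms(2-6) unfolding forward_pairs_def verts_eq vclass_eq by (auto simp: subset_iff)
  have card_X: "card X \<le> n" and card_Y: "card Y \<le> n"
    using assms(5,6) by (auto dest!: card_mono[rotated] simp: vclass_eq)
  have edges: "cross_edges (orient k n {p \<in> forward_pairs k n. b p}) \<pi> X Y =
      card {p \<in> X \<times> Y. b p = ?c p}" for b
    unfolding cross_edges_def using XY Ladj_orient[OF assms(1)]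
    by (intro arg_cong[where f = card] Collect_cong) auto
  have "measure_pmf.prob (pmf_of_set (tournaments k n))
           {T. real (cross_edges T \<pi> X Y) \<le> real (card X * card Y) / 2 - \<epsilon> * real n ^ 2}
      = measure_pmf.prob (Pi_pmf (forward_pairs k n) False (\<lambda>_. bernoulli_pmf (1/2)))
           {b. real (card {p \<in> X \<times> Y. b p = ?c p}) \<le> real (card (X \<times> Y)) / 2 - \<epsilon> * real n ^ 2}"
    by (simp add: pmf_of_set_tournaments edges card_cartesian_product)
  also have "\<dots> \<le> exp (- 2 * (\<epsilon> * real n ^ 2)\<^sup>2 / real n ^ 2)"
  proof (rule prob_few_agreements_le[OF finite_forward_pairs XY])
    show "real (card (X \<times> Y)) \<le> real n ^ 2"
      using mult_le_mono[OF card_X card_Y] by (simp add: card_cartesian_product power2_eq_square flip: of_nat_mult)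
  qed (use assms(7,8) in simp)
  also have "\<dots> = exp (- 2 * \<epsilon>\<^sup>2 * real n ^ 2)"
    using assms(8) by (simp add: power2_eq_square)
  finally show ?thesis .
qed

section \<open>The union bound\<close>

text \<open>Orders are normalised to \<open>0\<close> off the vertex set, which \<open>L\<^sub>\<pi>\<close> never looks at, so
  that only finitely many of them need to be considered.\<close>

definition vertex_orders :: "nat \<Rightarrow> nat \<Rightarrow> (nat \<times> nat \<Rightarrow> nat) set" where
  "vertex_orders k n = {\<pi> \<in> PiE_dflt (verts k n) 0 (\<lambda>_. {1..k * n}). inj_on \<pi> (verts k n)}"

lemma finite_vertex_orders: "finite (vertex_orders k n)"
  unfolding vertex_orders_def by (rule finite_subset[OF _ finite_PiE_dflt]) (auto simp: verts_eq)

lemma card_vertex_orders_le: "card (vertex_orders k n) \<le> (k * n) ^ (k * n)"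
proof -
  have "card (vertex_orders k n) \<le> card (PiE_dflt (verts k n) 0 (\<lambda>_. {1..k * n}))"
    unfolding vertex_orders_def by (intro card_mono finite_PiE_dflt) (auto simp: verts_eq)
  also have "\<dots> = (k * n) ^ (k * n)"
    by (simp add: card_PiE_dflt verts_eq card_cartesian_product)
  finally show ?thesis .
qed

lemma cross_class_pairs_subset: "cross_class_pairs k n \<subseteq> Pow (verts k n) \<times> Pow (verts k n)"
  unfolding cross_class_pairs_def verts_eq vclass_eq by auto

lemma finite_cross_class_pairs: "finite (cross_class_pairs k n)"
  by (rule finite_subset[OF cross_class_pairs_subset]) (simp add: verts_eq)

lemma card_cross_class_pairs_le: "card (cross_class_pairs k n) \<le> 4 ^ (k * n)"
proof -
  have "card (cross_class_pairs k n) \<le> card (Pow (verts k n) \<times> Pow (verts k n))"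
    by (intro card_mono cross_class_pairs_subset) (simp add: verts_eq)
  also have "\<dots> = 4 ^ (k * n)"
    by (simp add: card_cartesian_product card_Pow verts_eq flip: power_mult_distrib)
  finally show ?thesis .
qed

lemma prob_not_lower_uniform_le:
  assumes "\<epsilon> > 0" and "n > 0"
  shows "measure_pmf.prob (pmf_of_set (tournaments k n))
           {T. \<exists>\<pi>\<in>vertex_orders k n. \<not> lower_uniform k n T \<pi> \<epsilon>}
         \<le> real (k * n) ^ (k * n) * 4 ^ (k * n) * exp (- 2 * \<epsilon>\<^sup>2 * real n ^ 2)"
proof -
  let ?P = "measure_pmf.prob (pmf_of_set (tournaments k n))"
  let ?I = "vertex_orders k n \<times> cross_class_pairs k n"
  let ?sparse = "\<lambda>(\<pi>, X, Y). {T. real (cross_edges T \<pi> X Y) \<le> real (card X * card Y) / 2 - \<epsilon> * real n ^ 2}"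
  have "{T. \<exists>\<pi>\<in>vertex_orders k n. \<not> lower_uniform k n T \<pi> \<epsilon>} = (\<Union>z\<in>?I. ?sparse z)"
    unfolding lower_uniform_def by (auto simp: not_less)
  then have "?P {T. \<exists>\<pi>\<in>vertex_orders k n. \<not> lower_uniform k n T \<pi> \<epsilon>} \<le> (\<Sum>z\<in>?I. ?P (?sparse z))"
    using finite_vertex_orders finite_cross_class_pairs
    by (simp add: measure_pmf.finite_measure_subadditive_finite)
  also have "\<dots> \<le> (\<Sum>z\<in>?I. exp (- 2 * \<epsilon>\<^sup>2 * real n ^ 2))"
  proof (rule sum_mono)
    fix z assume "z \<in> ?I"
    then obtain \<pi> X Y where z: "z = (\<pi>, X, Y)" and \<pi>: "\<pi> \<in> vertex_orders k n"
      and "(X, Y) \<in> cross_class_pairs k n"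
      by auto
    then obtain i j where "1 \<le> i" "i < j" "j \<le> k" "X \<subseteq> vclass n i" "Y \<subseteq> vclass n j"
      unfolding cross_class_pairs_def by blast
    moreover have "inj_on \<pi> (verts k n)"
      using \<pi> unfolding vertex_orders_def by blast
    ultimately show "?P (?sparse z) \<le> exp (- 2 * \<epsilon>\<^sup>2 * real n ^ 2)"
      using prob_sparse_pair_le[of \<pi> k n i j X Y \<epsilon>] assms by (simp add: z)
  qed
  also have "\<dots> = real (card ?I) * exp (- 2 * \<epsilon>\<^sup>2 * real n ^ 2)"
    by simp
  also have "\<dots> \<le> real ((k * n) ^ (k * n) * 4 ^ (k * n)) * exp (- 2 * \<epsilon>\<^sup>2 * real n ^ 2)"
    unfolding card_cartesian_product
    using card_vertex_orders_le card_cross_class_pairs_le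
    by (intro mult_right_mono of_nat_mono mult_le_mono) auto
  also have "\<dots> = real (k * n) ^ (k * n) * 4 ^ (k * n) * exp (- 2 * \<epsilon>\<^sup>2 * real n ^ 2)"
    by simp
  finally show ?thesis .
qed

lemma cross_edges_cong:
  assumes "X \<union> Y \<subseteq> A" and "\<And>x. x \<in> A \<Longrightarrow> \<pi> x = \<pi>' x"
  shows "cross_edges T \<pi> X Y = cross_edges T \<pi>' X Y"
proof -
  have "Ladj T \<pi> (fst p) (snd p) = Ladj T \<pi>' (fst p) (snd p)" if "p \<in> X \<times> Y" for p
  proof -
    have "fst p \<in> A" and "snd p \<in> A"
      using that assms(1) by auto
    then show ?thesis
      unfolding Ladj_def using assms(2) by simp
  qed
  then have "{p \<in> X \<times> Y. Ladj T \<pi> (fst p) (snd p)} = {p \<in> X \<times> Y. Ladj T \<pi>' (fst p) (snd p)}"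
    by blast
  then show ?thesis
    by (simp add: cross_edges_def)
qed

lemma lower_uniform_cong:
  assumes "\<And>x. x \<in> verts k n \<Longrightarrow> \<pi> x = \<pi>' x"
  shows "lower_uniform k n T \<pi> \<epsilon> \<longleftrightarrow> lower_uniform k n T \<pi>' \<epsilon>"
proof -
  have "cross_edges T \<pi> X Y = cross_edges T \<pi>' X Y" if "(X, Y) \<in> cross_class_pairs k n" for X Y
    using that cross_class_pairs_subset[of k n] assms by (intro cross_edges_cong[of X Y "verts k n"]) auto
  then show ?thesis
    unfolding lower_uniform_def by auto
qed

lemma bad_event_subset_not_lower_uniform:
  assumes "1 \<le> r" and "r < k" and "n > 0"
  shows "bad_event k n r \<subseteq> {T. \<exists>\<pi>\<in>vertex_orders k n. \<not> lower_uniform k n T \<pi> (clique_eps k r)}"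
proof
  fix T assume "T \<in> bad_event k n r"
  then obtain \<pi> S where bij: "bij_betw \<pi> (verts k n) {1..k * n}"
    and S: "\<forall>i\<in>{1..r}. S i \<subseteq> vclass n i \<and> real n / 18 \<le> real (card (S i))"
    and Y: "Y_event k n T \<pi> r S"
    unfolding bad_event_def by auto
  define \<pi>' where "\<pi>' x = (if x \<in> verts k n then \<pi> x else 0)" for x
  have "\<pi>' \<in> PiE_dflt (verts k n) 0 (\<lambda>_. {1..k * n})"
    using bij_betwE[OF bij] by (simp add: PiE_dflt_def \<pi>'_def)
  moreover have "inj_on \<pi>' (verts k n)"
    using bij_betw_imp_inj_on[OF bij] inj_on_cong[of "verts k n" \<pi>' \<pi>] by (simp add: \<pi>'_def)
  ultimately have "\<pi>' \<in> vertex_orders k n"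
    by (simp add: vertex_orders_def)
  moreover have "\<not> lower_uniform k n T \<pi>' (clique_eps k r)"
  proof
    assume "lower_uniform k n T \<pi>' (clique_eps k r)"
    moreover have "lower_uniform k n T \<pi>' (clique_eps k r) \<longleftrightarrow> lower_uniform k n T \<pi> (clique_eps k r)"
      by (rule lower_uniform_cong) (simp add: \<pi>'_def)
    ultimately have "lower_uniform k n T \<pi> (clique_eps k r)"
      by blast
    then have "greedy_clique_setting k n r T \<pi> S"
      using assms S by unfold_locales auto
    then have "\<not> Y_event k n T \<pi> r S"
      by (rule greedy_clique_setting.not_Y_event)
    with Y show False
      by contradiction
  qed
  ultimately show "T \<in> {T. \<exists>\<pi>\<in>vertex_orders k n. \<not> lower_uniform k n T \<pi> (clique_eps k r)}"
    by blast
qed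

lemma prob_bad_event_le:
  assumes "1 \<le> r" and "r < k" and "n > 0"
  shows "measure_pmf.prob (pmf_of_set (tournaments k n)) (bad_event k n r)
           \<le> real (k * n) ^ (k * n) * 4 ^ (k * n) * exp (- 2 * (clique_eps k r)\<^sup>2 * real n ^ 2)"
proof -
  have "measure_pmf.prob (pmf_of_set (tournaments k n)) (bad_event k n r)
      \<le> measure_pmf.prob (pmf_of_set (tournaments k n))
          {T. \<exists>\<pi>\<in>vertex_orders k n. \<not> lower_uniform k n T \<pi> (clique_eps k r)}"
    using bad_event_subset_not_lower_uniform[OF assms] by (intro measure_pmf.finite_measure_mono) auto
  also have "\<dots> \<le> real (k * n) ^ (k * n) * 4 ^ (k * n) * exp (- 2 * (clique_eps k r)\<^sup>2 * real n ^ 2)"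
    using assms by (intro prob_not_lower_uniform_le clique_eps_pos) auto
  finally show ?thesis .
qed

lemma eventually_union_bound_powr_le:
  fixes K \<epsilon> :: real
  assumes "0 < K" and "0 < \<epsilon>"
  shows "eventually (\<lambda>n. (K * real n) powr (K * real n) * 4 powr (K * real n)
           * exp (- 2 * \<epsilon>\<^sup>2 * real n ^ 2) \<le> 1 / (K * real n)) sequentially"
  using assms by real_asymp

lemma eventually_union_bound_le:
  assumes "0 < k" and "0 < \<epsilon>"
  shows "eventually (\<lambda>n. real (k * n) ^ (k * n) * 4 ^ (k * n) * exp (- 2 * \<epsilon>\<^sup>2 * real n ^ 2)
           \<le> 1 / (real k * real n)) sequentially"
proof -
  have "0 < real k"
    using assms(1) by simp
  from eventually_union_bound_powr_le[OF this assms(2)] eventually_gt_at_top[of 0]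
  show ?thesis
  proof eventually_elim
    case (elim n)
    have "real (k * n) ^ (k * n) = real (k * n) powr real (k * n)"
      using elim(2) assms by (intro powr_realpow [symmetric]) simp
    moreover have "(4::real) ^ (k * n) = 4 powr real (k * n)"
      by (intro powr_realpow [symmetric]) simp
    ultimately show ?case
      using elim(1) by simp
  qed
qed

theorem lemma4p7:
  fixes k r :: nat
  assumes "k \<ge> 2" and "1 \<le> r" and "r \<le> k - 1"
  shows "\<exists>N. \<forall>n\<ge>N. measure (measure_pmf (pmf_of_set (tournaments k n))) (bad_event k n r)
                         \<le> 1 / (real k * real n)"
proof -
  have "r < k" and "0 < k"
    using assms by auto
  then obtain N where N: "\<And>n. n \<ge> N \<Longrightarrow> real (k * n) ^ (k * n) * 4 ^ (k * n)
      * exp (- 2 * (clique_eps k r)\<^sup>2 * real n ^ 2) \<le> 1 / (real k * real n)"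
    using eventually_union_bound_le[OF _ clique_eps_pos[OF assms(2)]]
    unfolding eventually_sequentially by blast
  show ?thesis
  proof (intro exI allI impI)
    fix n assume n: "max N 1 \<le> n"
    then have "measure_pmf.prob (pmf_of_set (tournaments k n)) (bad_event k n r)
        \<le> real (k * n) ^ (k * n) * 4 ^ (k * n) * exp (- 2 * (clique_eps k r)\<^sup>2 * real n ^ 2)"
      using prob_bad_event_le[OF assms(2) \<open>r < k\<close>] by simp
    also have "\<dots> \<le> 1 / (real k * real n)"
      using N n by simp
    finally show "measure_pmf.prob (pmf_of_set (tournaments k n)) (bad_event k n r) \<le> 1 / (real k * real n)" .
  qed
qed

end
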